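(* Let $s\ge 1$, $q=2^s$, and let $k$ be an integer with $1\le k\le q/2$. Let $\beta\in\mathbb{F}_{q^2}$ be an element of multiplicative order $q+1$. Define $$g(X)=\prod_{i=\frac{q-k}{2}+1}^{\frac{q+k}{2}}(X-\beta^i)\quad\text{if $k$ is even},\qquad g(X)=\prod_{i=-\frac{k-1}{2}}^{\frac{k-1}{2}}(X-\beta^i)\quad\text{if $k$ is odd}.$$ Then $g(X)\in\mathbb{F}_q[X]$, $g$ is monic of degree $k$, $X^k g(X^{-1})=g(X)$, and, writing $g(X)=X^k+c_{k-1}X^{k-1}+\dots+c_1X+c_0$, the matrix $\mathsf{Companion}(c_0,\dots,c_{k-1})^k$ is MDS.
   Context: For $c_0,\dots,c_{k-1}\in\mathbb{F}_q$, $\mathsf{Companion}(c_0,\dots,c_{k-1})$ denotes the $k\times k$ matrix whose first $k-1$ rows are $e_2,e_3,\dots,e_k$ (ones on the superdiagonal, zeros elsewhere) and whose last row is $(c_0,c_1,\dots,c_{k-1})$. A linear code over $\mathbb{F}_q$ of length $n$ and dimension $k'$ is MDS if its minimal Hamming distance equals $n-k'+1$. A $k\times k$ matrix $M$ over $\mathbb{F}_q$ is called MDS if the $k\times 2k$ matrix $[I_k\mid M]$ generates an MDS code of length $2k$ and dimension $k$ (equivalently, minimal distance $k+1$). *)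

theory Defs
  imports "Jordan_Normal_Form.Matrix" "HOL-Computational_Algebra.Polynomial"
begin

definition hamming_dist :: "'a::zero vec \<Rightarrow> 'a vec \<Rightarrow> nat" where
  "hamming_dist c d = card {j. j < dim_vec c \<and> c $ j \<noteq> d $ j}"

definition lin_code :: "'a::field set \<Rightarrow> 'a mat \<Rightarrow> 'a vec set" where
  "lin_code F G = {vec (dim_col G) (\<lambda>j. \<Sum>i<dim_row G. x $ i * G $$ (i, j)) | x.
       x \<in> carrier_vec (dim_row G) \<and> (\<forall>i<dim_row G. x $ i \<in> F)}"

definition min_distance :: "'a::field set \<Rightarrow> 'a mat \<Rightarrow> nat" where
  "min_distance F G = Min {hamming_dist c d | c d. c \<in> lin_code F G \<and> d \<in> lin_code F G \<and> c \<noteq> d}"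

definition id_concat :: "nat \<Rightarrow> 'a::{zero,one} mat \<Rightarrow> 'a mat" where
  "id_concat k M = mat k (2 * k) (\<lambda>(i, j). if j < k then (if i = j then 1 else 0) else M $$ (i, j - k))"

text \<open>A k x k matrix M over F is MDS iff [I_k | M] generates an MDS code of length 2k and
  dimension k over F, i.e. its minimal distance is 2k - k + 1 = k + 1.\<close>
definition mds_matrix :: "'a::field set \<Rightarrow> nat \<Rightarrow> 'a mat \<Rightarrow> bool" where
  "mds_matrix F k M \<longleftrightarrow> M \<in> carrier_mat k k \<and> min_distance F (id_concat k M) = k + 1"

definition companion :: "nat \<Rightarrow> (nat \<Rightarrow> 'a::{zero,one}) \<Rightarrow> 'a mat" where
  "companion k c = mat k k (\<lambda>(i, j). if i + 1 < k then (if j = i + 1 then 1 else 0) else c j)"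

text \<open>The subfield F_q of a field of order q^2: the fixed points of x \<mapsto> x^q.\<close>
definition subfield_q :: "nat \<Rightarrow> 'a::field set" where
  "subfield_q q = {x. x ^ q = x}"

end

theory Submission
  imports Defs "HOL-Computational_Algebra.Primes"
begin

(* A field with q^2 = 4^s elements has characteristic 2. As beta has order q + 1, the Frobenius
  x |-> x^q sends beta^i to beta^(-i), and so does inversion; the exponent sets are symmetric about
  0 (k odd) or (q + 1)/2 (k even), so both maps permute the roots of g. Hence g is fixed by the
  Frobenius, i.e. has coefficients in F_q, and is self-reciprocal.

  For the MDS property, the companion matrix C of g acts as multiplication by X modulo g, so the
  message x = (x_0, ..., x_(k-1)) is encoded by [I | C^k] as (x, X^k x mod g). Its weight is the
  number of nonzero coefficients of X^k x - (X^k x mod g), a nonzero multiple of g of degree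
  below 2k. The roots of g are k consecutive powers beta^a beta^t, and beta^j are distinct for
  j < 2k <= q + 1, so the BCH bound gives weight at least k + 1, which is the Singleton bound. *)

section \<open>Characteristic 2 and the Frobenius map\<close>

lemma power_card_minus_one_eq_1:
  fixes x :: "'a::{field,finite}"
  assumes "x \<noteq> 0"
  shows "x ^ (card (UNIV :: 'a set) - 1) = 1"
proof -
  let ?U = "UNIV - {0 :: 'a}"
  have "(\<Prod>y\<in>?U. y) = (\<Prod>y\<in>?U. x * y)"
    by (rule prod.reindex_bij_witness[of _ "\<lambda>y. y / x" "\<lambda>y. x * y", symmetric])
      (use assms in auto)
  also have "\<dots> = x ^ card ?U * (\<Prod>y\<in>?U. y)"
    by (simp add: prod.distrib)
  finally have "x ^ card ?U = 1"
    by (simp add: prod_zero_iff)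
  then show ?thesis
    by (simp add: card_Diff_singleton)
qed

lemma CHAR_eq_2_if_card_even:
  assumes "even (card (UNIV :: 'a::{field,finite} set))"
  shows "CHAR('a) = 2"
proof -
  have "odd (card (UNIV :: 'a set) - 1)"
    using assms finite_UNIV_card_ge_0[where 'a='a] by simp
  then have "(-1 :: 'a) = 1"
    using power_card_minus_one_eq_1[of "-1 :: 'a"] by simp
  then have "of_nat 2 = (1 - (-1) :: 'a)"
    by simp
  then have "of_nat 2 = (0 :: 'a)"
    using \<open>-1 = 1\<close> by simp
  then have "CHAR('a) dvd 2"
    using of_nat_eq_0_iff_char_dvd by blast
  then show ?thesis
    using two_is_prime_nat CHAR_not_1'[where 'a='a] unfolding prime_nat_iff by auto
qed

lemma map_poly_prod:
  fixes f :: "'a::comm_semiring_1 \<Rightarrow> 'b::comm_semiring_1"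
  assumes add: "\<And>x y. f (x + y) = f x + f y" and mult: "\<And>x y. f (x * y) = f x * f y"
    and "f 0 = 0" "f 1 = 1"
  shows "map_poly f (\<Prod>i\<in>I. p i) = (\<Prod>i\<in>I. map_poly f (p i))"
proof -
  have map_poly_mult: "map_poly f (r * s) = map_poly f r * map_poly f s" for r s
    by (rule poly_eqI)
      (simp add: coeff_map_poly coeff_mult assms comp_def sum_comp_morphism[of f, symmetric])
  show ?thesis
    by (induction I rule: infinite_finite_induct) (simp_all add: map_poly_mult assms)
qed

lemma coeff_prod_linear_power_CHAR_eq:
  fixes r :: "'b \<Rightarrow> 'a::field"
  assumes "prime CHAR('a)" and m: "m = CHAR('a) ^ n"
    and \<sigma>: "bij_betw \<sigma> I I" and r: "\<And>i. i \<in> I \<Longrightarrow> r i ^ m = r (\<sigma> i)"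
  shows "coeff (\<Prod>i\<in>I. [:- r i, 1:]) j ^ m = coeff (\<Prod>i\<in>I. [:- r i, 1:]) j"
proof -
  define \<phi> where "\<phi> x = x ^ m" for x :: 'a
  have "m > 0"
    using assms(1) m by (simp add: prime_gt_0_nat)
  have add: "\<phi> (x + y) = \<phi> x + \<phi> y" for x y
    unfolding \<phi>_def by (rule freshmans_dream'[OF assms(1) m])
  have hom: "\<phi> (x * y) = \<phi> x * \<phi> y" "\<phi> 0 = 0" "\<phi> 1 = 1" for x y
    unfolding \<phi>_def using \<open>m > 0\<close> by (simp_all add: power_mult_distrib)
  have neg: "\<phi> (- x) = - \<phi> x" for x
    using add[of x "- x"] hom(2) by (metis add.commute eq_neg_iff_add_eq_0 add.right_inverse)
  have "map_poly \<phi> [:- r i, 1:] = [:- r (\<sigma> i), 1:]" if "i \<in> I" for i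
    using r[OF that] by (simp add: map_poly_pCons hom neg) (simp add: \<phi>_def)
  then have "map_poly \<phi> (\<Prod>i\<in>I. [:- r i, 1:]) = (\<Prod>i\<in>I. [:- r (\<sigma> i), 1:])"
    by (simp add: map_poly_prod[OF add hom] cong: prod.cong)
  also have "\<dots> = (\<Prod>i\<in>I. [:- r i, 1:])"
    by (rule prod.reindex_bij_betw[OF \<sigma>])
  finally show ?thesis
    by (metis coeff_map_poly \<phi>_def hom(2))
qed

lemma reflect_poly_prod_linear_CHAR_2:
  fixes r :: "'b \<Rightarrow> 'a::field"
  assumes char: "CHAR('a) = 2" and \<tau>: "bij_betw \<tau> I I"
    and r0: "\<And>i. i \<in> I \<Longrightarrow> r i \<noteq> 0" and r: "\<And>i. i \<in> I \<Longrightarrow> r (\<tau> i) = inverse (r i)"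
  shows "reflect_poly (\<Prod>i\<in>I. [:- r i, 1:]) = (\<Prod>i\<in>I. [:- r i, 1:])"
proof -
  define P where "P = (\<Prod>i\<in>I. r i)"
  have linear: "reflect_poly [:- x, 1:] = smult x [:- inverse x, 1:]" if "x \<noteq> 0" for x :: 'a
    using that by (simp add: reflect_poly_pCons' monom_Suc monom_0 uminus_CHAR_2[OF char])
  have "reflect_poly (\<Prod>i\<in>I. [:- r i, 1:]) = (\<Prod>i\<in>I. smult (r i) [:- r (\<tau> i), 1:])"
    unfolding reflect_poly_prod by (intro prod.cong refl) (metis linear r0 r)
  also have "\<dots> = smult P (\<Prod>i\<in>I. [:- r (\<tau> i), 1:])"
    unfolding P_def by (rule prod_smult)
  also have "(\<Prod>i\<in>I. [:- r (\<tau> i), 1:]) = (\<Prod>i\<in>I. [:- r i, 1:])"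
    by (rule prod.reindex_bij_betw[OF \<tau>])
  also have "P = 1"
  proof -
    have "P * P = (\<Prod>i\<in>I. r i) * (\<Prod>i\<in>I. r (\<tau> i))"
      unfolding P_def using prod.reindex_bij_betw[OF \<tau>, of r] by simp
    also have "\<dots> = (\<Prod>i\<in>I. r i * r (\<tau> i))"
      by (rule prod.distrib[symmetric])
    also have "\<dots> = 1"
      by (rule prod.neutral) (simp add: r r0)
    finally have "P * P = 1" .
    have two: "(2 :: 'a) = 0"
      using of_nat_CHAR[where 'a='a] char by simp
    have "(P + 1) * (P + 1) = P * P + 2 * P + 1"
      by (simp add: algebra_simps)
    also have "\<dots> = 0"
      using \<open>P * P = 1\<close> two by simp
    finally have "P = - 1"
      by (simp add: eq_neg_iff_add_eq_0)
    then show "P = 1"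
      by (simp add: uminus_CHAR_2[OF char])
  qed
  finally show ?thesis
    by simp
qed

lemma coeff_degree_minus_eq_if_reflect_poly_eq:
  assumes "reflect_poly p = p" "i \<le> degree p"
  shows "coeff p (degree p - i) = coeff p i"
  using coeff_reflect_poly[of p i] assms by simp

section \<open>The generator polynomial\<close>

lemma power_power_int_eq_power_int_minus:
  fixes x :: "'a::field"
  assumes "x ^ Suc q = 1"
  shows "(x powi i) ^ q = x powi (- i)"
proof -
  have "x \<noteq> 0"
    using assms by auto
  have "x powi (int (Suc q) * i) = 1"
    using assms by (simp only: power_int_mult power_int_of_nat power_int_1_left)
  have "(x powi i) ^ q = x powi (int (Suc q) * i + - i)"
    by (simp only: power_int_of_nat[symmetric] power_int_mult[symmetric]) (simp add: algebra_simps)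
  also have "\<dots> = x powi (- i)"
    using power_int_add[of x "int (Suc q) * i" "- i"] \<open>x \<noteq> 0\<close> \<open>x powi (int (Suc q) * i) = 1\<close> by simp
  finally show ?thesis .
qed

lemma inj_on_power_if_order_ge:
  fixes x :: "'a::field"
  assumes "x \<noteq> 0" and order: "\<And>n. 0 < n \<Longrightarrow> n < N \<Longrightarrow> x ^ n \<noteq> 1"
  shows "inj_on (\<lambda>j. x ^ j) {..<N}"
proof -
  have "x ^ i \<noteq> x ^ j" if "i < j" "j < N" for i j
  proof
    assume "x ^ i = x ^ j"
    moreover have "x ^ j = x ^ i * x ^ (j - i)"
      using \<open>i < j\<close> by (simp flip: power_add)
    ultimately have "x ^ (j - i) = 1"
      using \<open>x \<noteq> 0\<close> by simp
    then show False
      using order[of "j - i"] that by simp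
  qed
  then show ?thesis
    by (intro inj_onI) (metis lessThan_iff linorder_neqE_nat)
qed

lemma bij_betw_reflection:
  fixes c :: "'a::ab_group_add"
  assumes "\<And>i. i \<in> I \<Longrightarrow> c - i \<in> I"
  shows "bij_betw (\<lambda>i. c - i) I I"
  using assms by (intro bij_betw_byWitness[where f' = "\<lambda>i. c - i"]) auto

lemma coeff_prod_reflection_closed_in_subfield_q:
  fixes \<beta> :: "'a::field"
  assumes "CHAR('a) = 2" "q = 2 ^ s" "\<beta> ^ Suc q = 1" "\<beta> powi c = 1"
    and "\<And>i. i \<in> I \<Longrightarrow> c - i \<in> I"
  shows "coeff (\<Prod>i\<in>I. [:- (\<beta> powi i), 1:]) j \<in> subfield_q q"
proof -
  have "\<beta> \<noteq> 0"
    using assms(3) by auto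
  have "(\<beta> powi i) ^ q = \<beta> powi (c - i)" for i
    using power_power_int_eq_power_int_minus[OF assms(3), of i] assms(4) \<open>\<beta> \<noteq> 0\<close>
    by (simp add: power_int_diff power_int_minus divide_inverse)
  then show ?thesis
    unfolding subfield_q_def using assms(1,2) bij_betw_reflection[OF assms(5)]
    by (intro CollectI coeff_prod_linear_power_CHAR_eq) simp_all
qed

lemma reflect_poly_prod_reflection_closed:
  fixes \<beta> :: "'a::field"
  assumes "CHAR('a) = 2" "\<beta> \<noteq> 0" "\<beta> powi c = 1" and "\<And>i. i \<in> I \<Longrightarrow> c - i \<in> I"
  shows "reflect_poly (\<Prod>i\<in>I. [:- (\<beta> powi i), 1:]) = (\<Prod>i\<in>I. [:- (\<beta> powi i), 1:])"
proof (rule reflect_poly_prod_linear_CHAR_2)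
  show "\<beta> powi (c - i) = inverse (\<beta> powi i)" for i
    using power_int_diff[of \<beta> c i] assms(2,3) by (simp add: divide_inverse)
qed (use assms bij_betw_reflection in auto)

lemma prod_linear_powi_interval:
  fixes \<beta> :: "'a::field"
  assumes "\<beta> \<noteq> 0"
  shows "degree (\<Prod>i\<in>{a..a + int k - 1}. [:- (\<beta> powi i), 1:]) = k"
    and "lead_coeff (\<Prod>i\<in>{a..a + int k - 1}. [:- (\<beta> powi i), 1:]) = 1"
    and "t < k \<Longrightarrow> poly (\<Prod>i\<in>{a..a + int k - 1}. [:- (\<beta> powi i), 1:]) (\<beta> powi a * \<beta> ^ t) = 0"
proof -
  show "degree (\<Prod>i\<in>{a..a + int k - 1}. [:- (\<beta> powi i), 1:]) = k"
    by (subst degree_prod_sum_eq) auto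
  show "lead_coeff (\<Prod>i\<in>{a..a + int k - 1}. [:- (\<beta> powi i), 1:]) = 1"
    by (simp add: lead_coeff_prod)
  assume "t < k"
  then have "a + int t \<in> {a..a + int k - 1}" and "\<beta> powi a * \<beta> ^ t = \<beta> powi (a + int t)"
    using assms by (auto simp: power_int_add power_int_of_nat)
  then show "poly (\<Prod>i\<in>{a..a + int k - 1}. [:- (\<beta> powi i), 1:]) (\<beta> powi a * \<beta> ^ t) = 0"
    by (auto simp: poly_prod intro: prod_zero bexI[of _ "a + int t"])
qed

lemma root_exponent_interval:
  assumes "even q"
  obtains a c :: int
  where "(if even k then {(int q - int k) div 2 + 1 .. (int q + int k) div 2}
      else {- ((int k - 1) div 2) .. (int k - 1) div 2}) = {a .. a + int k - 1}"
    and "c = 0 \<or> c = int q + 1" and "\<And>i. i \<in> {a .. a + int k - 1} \<Longrightarrow> c - i \<in> {a .. a + int k - 1}"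
proof (cases "even k")
  case True
  then obtain K where "k = 2 * K"
    by blast
  moreover obtain Q where "q = 2 * Q"
    using assms by blast
  ultimately show ?thesis
    using True by (intro that[of "int Q - int K + 1" "int q + 1"]) auto
next
  case False
  then obtain K where "k = 2 * K + 1"
    using oddE by blast
  then show ?thesis
    using False by (intro that[of "- int K" 0]) auto
qed

section \<open>Powers of the companion matrix\<close>

lemma mod_monic_pCons_0:
  fixes g p :: "'a::field poly"
  assumes "degree g = k" "lead_coeff g = 1" "degree p < k"
  shows "pCons 0 p mod g = pCons 0 p - smult (coeff p (k - 1)) g"
proof -
  define r where "r = pCons 0 p - smult (coeff p (k - 1)) g"
  have "degree (pCons 0 p) \<le> k"
    using assms(3) degree_pCons_le[of 0 p] by linarith
  then have "degree r \<le> k"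
    unfolding r_def using assms(1) by (intro degree_diff_le) (simp_all add: degree_smult_le)
  moreover have "coeff r k = 0"
    using assms unfolding r_def by (cases k) simp_all
  then have "degree r \<noteq> k"
    using assms(3) by (metis degree_0 leading_coeff_0_iff not_less_zero)
  ultimately have "degree r < k"
    by simp
  then have "r mod g = r"
    using assms(1) by (simp add: mod_poly_less)
  moreover have "pCons 0 p mod g = r mod g"
    unfolding mod_eq_dvd_iff r_def by (simp add: dvd_smult)
  ultimately show ?thesis
    unfolding r_def by simp
qed

lemma mult_companion_index:
  fixes A :: "'a::semiring_1 mat"
  assumes "A \<in> carrier_mat n k" "i < n" "j < k"
  shows "(A * companion k c) $$ (i, j) = (if j = 0 then 0 else A $$ (i, j - 1)) + A $$ (i, k - 1) * c j"
proof -
  have "(A * companion k c) $$ (i, j)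
      = (\<Sum>l\<in>{0..<k}. A $$ (i, l) * (if l + 1 < k then if j = l + 1 then 1 else 0 else c j))"
    using assms by (simp add: companion_def scalar_prod_def)
  also have "{0..<k} = insert (k - 1) {0..<k - 1}"
    using assms(3) by auto
  also have "(\<Sum>l\<in>insert (k - 1) {0..<k - 1}.
      A $$ (i, l) * (if l + 1 < k then if j = l + 1 then 1 else 0 else c j))
      = A $$ (i, k - 1) * c j + (\<Sum>l\<in>{0..<k - 1}. if l = j - 1 \<and> j \<noteq> 0 then A $$ (i, l) else 0)"
  proof -
    have "(\<Sum>l\<in>{0..<k - 1}. A $$ (i, l) * (if l + 1 < k then if j = l + 1 then 1 else 0 else c j))
        = (\<Sum>l\<in>{0..<k - 1}. if l = j - 1 \<and> j \<noteq> 0 then A $$ (i, l) else 0)"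
      by (rule sum.cong) auto
    then show ?thesis
      using assms(3) by simp
  qed
  also have "(\<Sum>l\<in>{0..<k - 1}. if l = j - 1 \<and> j \<noteq> 0 then A $$ (i, l) else 0)
      = (if j = 0 then 0 else A $$ (i, j - 1))"
    using assms(3) by (auto simp: sum.delta)
  finally show ?thesis
    by (simp add: add.commute)
qed

lemma companion_power_index:
  fixes g :: "'a::field poly"
  assumes g: "degree g = k" "lead_coeff g = 1" and "i < k" "j < k"
  shows "(companion k (\<lambda>j. - coeff g j) ^\<^sub>m n) $$ (i, j) = coeff (monom 1 (n + i) mod g) j"
  using \<open>j < k\<close>
proof (induction n arbitrary: j)
  case 0
  have "monom 1 i mod g = monom 1 i"
    using \<open>i < k\<close> g by (simp add: mod_poly_less degree_monom_eq)
  then show ?case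
    using 0 \<open>i < k\<close> by (simp add: companion_def coeff_monom)
next
  case (Suc n)
  define C where "C = companion k (\<lambda>j. - coeff g j)"
  define p where "p = monom 1 (n + i) mod g"
  have "g \<noteq> 0"
    using g by auto
  then have "degree p < k"
    using degree_mod_less[OF \<open>g \<noteq> 0\<close>, of "monom 1 (n + i)"] g \<open>i < k\<close> unfolding p_def by auto
  have "monom 1 (Suc n + i) mod g = ([:0, 1:] * monom 1 (n + i)) mod g"
    by (simp add: monom_Suc)
  also have "\<dots> = ([:0, 1:] * p) mod g"
    unfolding p_def by (rule mod_mult_right_eq[symmetric])
  also have "\<dots> = pCons 0 p - smult (coeff p (k - 1)) g"
    using mod_monic_pCons_0[OF g \<open>degree p < k\<close>] by simp
  finally have shift: "monom 1 (Suc n + i) mod g = pCons 0 p - smult (coeff p (k - 1)) g" .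
  have "C ^\<^sub>m n \<in> carrier_mat k k"
    unfolding C_def companion_def by (intro pow_carrier_mat) simp
  have "(C ^\<^sub>m Suc n) $$ (i, j) = (C ^\<^sub>m n * C) $$ (i, j)"
    by simp
  also have "\<dots> = (if j = 0 then 0 else (C ^\<^sub>m n) $$ (i, j - 1)) + (C ^\<^sub>m n) $$ (i, k - 1) * - coeff g j"
    unfolding C_def by (rule mult_companion_index) (use Suc.prems \<open>i < k\<close> \<open>C ^\<^sub>m n \<in> carrier_mat k k\<close> C_def in auto)
  also have "\<dots> = (if j = 0 then 0 else coeff p (j - 1)) - coeff p (k - 1) * coeff g j"
    using Suc.IH Suc.prems unfolding C_def p_def by simp
  finally show ?case
    unfolding C_def shift by (cases j) simp_all
qed

section \<open>The BCH bound\<close>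

lemma vandermonde_sum_eq_0_imp_eq_0:
  fixes y z :: "'b \<Rightarrow> 'a::field"
  assumes "finite S" "inj_on z S" and sums: "\<And>t. t < card S \<Longrightarrow> (\<Sum>j\<in>S. y j * z j ^ t) = 0"
    and "j0 \<in> S"
  shows "y j0 = 0"
proof -
  define p where "p = (\<Prod>m\<in>S - {j0}. [:- z m, 1:])"
  have p_at: "poly p (z j) = (\<Prod>m\<in>S - {j0}. z j - z m)" for j
    unfolding p_def by (simp add: poly_prod)
  have "degree p = card (S - {j0})"
    unfolding p_def by (subst degree_prod_sum_eq) auto
  moreover have "card S > 0"
    using assms(1,4) card_gt_0_iff by blast
  ultimately have "degree p < card S"
    using assms(1,4) by simp
  have "(\<Sum>j\<in>S. y j * poly p (z j)) = (\<Sum>j\<in>S. \<Sum>t\<le>degree p. coeff p t * (y j * z j ^ t))"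
    by (simp add: poly_altdef sum_distrib_left mult.commute mult.left_commute)
  also have "\<dots> = (\<Sum>t\<le>degree p. coeff p t * (\<Sum>j\<in>S. y j * z j ^ t))"
    by (subst sum.swap) (simp add: sum_distrib_left)
  also have "\<dots> = 0"
    using sums \<open>degree p < card S\<close> by simp
  finally have "(\<Sum>j\<in>S. y j * poly p (z j)) = 0" .
  moreover have "(\<Sum>j\<in>S - {j0}. y j * poly p (z j)) = 0"
    using \<open>finite S\<close> by (intro sum.neutral) (auto simp: p_at)
  ultimately have "y j0 * poly p (z j0) = 0"
    using assms(1,4) by (simp add: sum.remove)
  moreover have "poly p (z j0) \<noteq> 0"
    using assms(1,2,4) by (auto simp: p_at inj_on_eq_iff)
  ultimately show ?thesis
    by simp
qed

lemma card_nonzero_coeffs_ge_if_consecutive_roots: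
  fixes p :: "'a::field poly"
  assumes "p \<noteq> 0" "b \<noteq> 0" and inj: "inj_on (\<lambda>j. z ^ j) {..degree p}"
    and roots: "\<And>t. t < w \<Longrightarrow> poly p (b * z ^ t) = 0"
  shows "w + 1 \<le> card {j. coeff p j \<noteq> 0}"
proof (rule ccontr)
  define S where "S = {j. coeff p j \<noteq> 0}"
  have "S \<subseteq> {..degree p}"
    unfolding S_def by (auto intro: le_degree)
  then have "finite S"
    using finite_subset by blast
  assume "\<not> w + 1 \<le> card {j. coeff p j \<noteq> 0}"
  then have "card S \<le> w"
    unfolding S_def by simp
  have sums: "(\<Sum>j\<in>S. (coeff p j * b ^ j) * (z ^ j) ^ t) = 0" if "t < card S" for t
  proof -
    have "poly p (b * z ^ t) = (\<Sum>j\<le>degree p. coeff p j * (b * z ^ t) ^ j)"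
      by (rule poly_altdef)
    also have "\<dots> = (\<Sum>j\<in>S. coeff p j * (b * z ^ t) ^ j)"
      by (rule sum.mono_neutral_right) (auto simp: S_def intro: le_degree)
    also have "\<dots> = (\<Sum>j\<in>S. (coeff p j * b ^ j) * (z ^ j) ^ t)"
      by (rule sum.cong)
        (simp_all add: power_mult_distrib power_mult[symmetric] mult.commute mult.left_commute)
    finally show ?thesis
      using roots[of t] that \<open>card S \<le> w\<close> by simp
  qed
  have "inj_on (\<lambda>j. z ^ j) S"
    using inj \<open>S \<subseteq> {..degree p}\<close> by (rule inj_on_subset)
  moreover have "degree p \<in> S"
    unfolding S_def using assms(1) by simp
  ultimately have "coeff p (degree p) * b ^ degree p = 0"
    using vandermonde_sum_eq_0_imp_eq_0[OF \<open>finite S\<close> _ sums] by blast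
  then show False
    using assms(1,2) by simp
qed

section \<open>Codes generated by \<open>[I | M]\<close>\<close>

lemma min_distance_eqI:
  assumes "c \<in> lin_code F G" "d \<in> lin_code F G" "c \<noteq> d" "hamming_dist c d = w"
    and lower: "\<And>c d. c \<in> lin_code F G \<Longrightarrow> d \<in> lin_code F G \<Longrightarrow> c \<noteq> d \<Longrightarrow> w \<le> hamming_dist c d"
  shows "min_distance F G = w"
proof -
  define D where "D = {hamming_dist c d | c d. c \<in> lin_code F G \<and> d \<in> lin_code F G \<and> c \<noteq> d}"
  have "D \<subseteq> {..dim_col G}"
  proof
    fix e assume "e \<in> D"
    then obtain c d where "e = hamming_dist c d" "c \<in> lin_code F G"
      unfolding D_def by blast
    have "card {j. j < n \<and> P j} \<le> n" for n P
      by (rule order.trans[OF card_mono[of "{..<n}"]]) auto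
    then show "e \<in> {..dim_col G}"
      using \<open>e = hamming_dist c d\<close> \<open>c \<in> lin_code F G\<close>
      unfolding hamming_dist_def lin_code_def by auto
  qed
  then have "finite D"
    by (rule finite_subset) simp
  moreover have "w \<le> e" if "e \<in> D" for e
    using that lower unfolding D_def by blast
  moreover have "w \<in> D"
    using assms(1-4) unfolding D_def by blast
  ultimately show ?thesis
    unfolding min_distance_def D_def[symmetric] by (rule Min_eqI)
qed

definition code_word :: "'a::field mat \<Rightarrow> 'a vec \<Rightarrow> 'a vec" where
  "code_word G v = vec (dim_col G) (\<lambda>j. \<Sum>i<dim_row G. v $ i * G $$ (i, j))"

lemma lin_code_eq:
  "lin_code F G = {code_word G v | v. v \<in> carrier_vec (dim_row G) \<and> (\<forall>i<dim_row G. v $ i \<in> F)}"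
  unfolding lin_code_def code_word_def ..

lemma code_word_in_lin_code:
  assumes "v \<in> carrier_vec (dim_row G)" "\<And>i. i < dim_row G \<Longrightarrow> v $ i \<in> F"
  shows "code_word G v \<in> lin_code F G"
  using assms unfolding lin_code_eq by auto

lemma hamming_dist_code_word:
  "hamming_dist (code_word G v) (code_word G v')
    = card {j. j < dim_col G \<and> (\<Sum>i<dim_row G. (v $ i - v' $ i) * G $$ (i, j)) \<noteq> 0}"
  unfolding hamming_dist_def code_word_def
  by (intro arg_cong[where f = card] Collect_cong) (auto simp: left_diff_distrib sum_subtractf)

lemma code_word_unit_vec:
  assumes "i < dim_row G"
  shows "code_word G (unit_vec (dim_row G) i) = row G i"
proof (rule eq_vecI)
  fix j assume "j < dim_vec (row G i)"
  then have "code_word G (unit_vec (dim_row G) i) $ j = (\<Sum>l<dim_row G. (if l = i then 1 else 0) * G $$ (l, j))"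
    unfolding code_word_def using assms by (auto intro!: sum.cong)
  also have "\<dots> = (\<Sum>l<dim_row G. if l = i then G $$ (l, j) else 0)"
    by (rule sum.cong) auto
  finally show "code_word G (unit_vec (dim_row G) i) $ j = row G i $ j"
    using assms \<open>j < dim_vec (row G i)\<close> by (simp add: sum.delta)
qed (simp add: code_word_def)

lemma hamming_dist_lin_code_id_concat_ge:
  fixes M :: "'a::field mat"
  assumes weight: "\<And>x i0. i0 < k \<Longrightarrow> x i0 \<noteq> 0 \<Longrightarrow>
      w \<le> card {j. j < 2 * k \<and> (\<Sum>i<k. x i * id_concat k M $$ (i, j)) \<noteq> 0}"
    and codewords: "c \<in> lin_code F (id_concat k M)" "d \<in> lin_code F (id_concat k M)" and "c \<noteq> d"
  shows "w \<le> hamming_dist c d"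
proof -
  define G where "G = id_concat k M"
  have dims: "dim_row G = k" "dim_col G = 2 * k"
    unfolding G_def id_concat_def by simp_all
  obtain v v' where c: "c = code_word G v" and d: "d = code_word G v'"
    using codewords unfolding lin_code_eq G_def by blast
  have "\<exists>i0<k. v $ i0 \<noteq> v' $ i0"
  proof (rule ccontr)
    assume "\<not> (\<exists>i0<k. v $ i0 \<noteq> v' $ i0)"
    then have "c = d"
      unfolding c d code_word_def dims by (intro eq_vecI) (auto intro!: sum.cong)
    then show False
      using \<open>c \<noteq> d\<close> by simp
  qed
  then obtain i0 where "i0 < k" "v $ i0 \<noteq> v' $ i0"
    by blast
  then show ?thesis
    unfolding c d hamming_dist_code_word dims unfolding G_def by (intro weight[of i0]) simp_all
qed

lemma hamming_dist_row_0_id_concat_le: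
  assumes "1 \<le> k"
  shows "hamming_dist (row (id_concat k M) 0) (0\<^sub>v (2 * k)) \<le> k + 1"
proof -
  have "hamming_dist (row (id_concat k M) 0) (0\<^sub>v (2 * k))
      = card {j. j < 2 * k \<and> id_concat k M $$ (0, j) \<noteq> 0}"
    unfolding hamming_dist_def using assms
    by (intro arg_cong[where f = card] Collect_cong) (auto simp: id_concat_def)
  also have "\<dots> \<le> card (insert 0 {k..<2 * k})"
    using assms by (intro card_mono) (auto simp: id_concat_def split: if_splits)
  also have "\<dots> = k + 1"
    using assms by simp
  finally show ?thesis .
qed

lemma mds_matrix_id_concatI:
  fixes M :: "'a::field mat"
  assumes "M \<in> carrier_mat k k" and "1 \<le> k" "0 \<in> F" "1 \<in> F"
    and weight: "\<And>x i0. i0 < k \<Longrightarrow> x i0 \<noteq> 0 \<Longrightarrow>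
      k + 1 \<le> card {j. j < 2 * k \<and> (\<Sum>i<k. x i * id_concat k M $$ (i, j)) \<noteq> 0}"
  shows "mds_matrix F k M"
proof -
  define G where "G = id_concat k M"
  have dims: "dim_row G = k" "dim_col G = 2 * k"
    unfolding G_def id_concat_def by simp_all
  have lower: "k + 1 \<le> hamming_dist c d"
    if "c \<in> lin_code F G" "d \<in> lin_code F G" "c \<noteq> d" for c d
    using hamming_dist_lin_code_id_concat_ge[of k "k + 1" M] weight that unfolding G_def by blast
  have "code_word G (unit_vec k 0) = row G 0"
    using code_word_unit_vec[of 0 G] dims \<open>1 \<le> k\<close> by simp
  then have row_0: "row G 0 \<in> lin_code F G"
    using code_word_in_lin_code[of "unit_vec k 0" G F] dims assms(3,4) by simp
  have "code_word G (0\<^sub>v k) = 0\<^sub>v (2 * k)"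
    unfolding code_word_def dims by auto
  then have zero: "0\<^sub>v (2 * k) \<in> lin_code F G"
    using code_word_in_lin_code[of "0\<^sub>v k" G F] dims assms(3) by simp
  have "row G 0 $ 0 = 1"
    using dims \<open>1 \<le> k\<close> by (simp add: G_def id_concat_def)
  then have nonzero: "row G 0 \<noteq> 0\<^sub>v (2 * k)"
    using \<open>1 \<le> k\<close> by auto
  have "hamming_dist (row G 0) (0\<^sub>v (2 * k)) = k + 1"
    using hamming_dist_row_0_id_concat_le[OF \<open>1 \<le> k\<close>, of M] lower[OF row_0 zero nonzero]
    unfolding G_def by simp
  then have "min_distance F G = k + 1"
    using lower by (rule min_distance_eqI[OF row_0 zero nonzero])
  then show ?thesis
    unfolding mds_matrix_def G_def using assms(1) by simp
qed

section \<open>Weights of the code of a companion power\<close>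

lemma sum_mod_poly:
  fixes g :: "'a::field poly"
  shows "(\<Sum>i\<in>A. f i) mod g = (\<Sum>i\<in>A. f i mod g)"
  by (induction A rule: infinite_finite_induct) (simp_all add: poly_mod_add_left)

lemma id_concat_companion_power_combination:
  fixes g :: "'a::field poly" and x :: "nat \<Rightarrow> 'a"
  assumes g: "degree g = k" "lead_coeff g = 1" and "j < 2 * k"
  shows "(\<Sum>i<k. x i * id_concat k (companion k (\<lambda>j. - coeff g j) ^\<^sub>m k) $$ (i, j))
    = (if j < k then x j else coeff (monom 1 k * (\<Sum>i<k. monom (x i) i) mod g) (j - k))"
proof (cases "j < k")
  case True
  then have "(\<Sum>i<k. x i * id_concat k (companion k (\<lambda>j. - coeff g j) ^\<^sub>m k) $$ (i, j))
      = (\<Sum>i<k. if i = j then x i else 0)"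
    using assms(3) unfolding id_concat_def by (intro sum.cong) auto
  then show ?thesis
    using True by (simp add: sum.delta)
next
  case False
  have "(\<Sum>i<k. x i * id_concat k (companion k (\<lambda>j. - coeff g j) ^\<^sub>m k) $$ (i, j))
      = (\<Sum>i<k. x i * coeff (monom 1 (k + i) mod g) (j - k))"
    using False assms(3) unfolding id_concat_def
    by (intro sum.cong) (auto simp: companion_power_index[OF g])
  also have "\<dots> = coeff (\<Sum>i<k. smult (x i) (monom 1 (k + i) mod g)) (j - k)"
    by (simp add: coeff_sum)
  also have "(\<Sum>i<k. smult (x i) (monom 1 (k + i) mod g)) = monom 1 k * (\<Sum>i<k. monom (x i) i) mod g"
    by (simp add: sum_distrib_left mult_monom sum_mod_poly mod_smult_left[symmetric] smult_monom)
  finally show ?thesis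
    using False by simp
qed

lemma card_nonzero_coeffs_shifted_diff:
  fixes u r :: "'a::comm_ring_1 poly"
  assumes "degree u < k" "degree r < k"
  shows "card {j. j < 2 * k \<and> (if j < k then coeff u j else coeff r (j - k)) \<noteq> 0}
    = card {j. coeff (monom 1 k * u - r) j \<noteq> 0}"
proof -
  define h where "h j = (if j < k then j + k else j - k)" for j
  define p where "p = monom 1 k * u - r"
  have coeff: "coeff p j = (if j < k then - coeff r j else coeff u (j - k))" for j
    unfolding p_def using assms(2) by (simp add: coeff_monom_mult coeff_eq_0)
  have "coeff u (j - k) = 0" if "2 * k \<le> j" for j
    using assms(1) that by (intro coeff_eq_0) simp
  then have "bij_betw h {j. j < 2 * k \<and> (if j < k then coeff u j else coeff r (j - k)) \<noteq> 0}
      {j. coeff p j \<noteq> 0}"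
    by (intro bij_betw_byWitness[where f' = h]) (auto simp: h_def coeff split: if_splits)
  then show ?thesis
    unfolding p_def by (rule bij_betw_same_card)
qed

lemma card_nonzero_coeffs_shifted_remainder_ge:
  fixes g u :: "'a::field poly"
  assumes g: "degree g = k" "lead_coeff g = 1" and "b \<noteq> 0"
    and inj: "inj_on (\<lambda>j. z ^ j) {..<2 * k}" and roots: "\<And>t. t < k \<Longrightarrow> poly g (b * z ^ t) = 0"
    and "u \<noteq> 0" "degree u < k"
  shows "k + 1 \<le> card {j. coeff (monom 1 k * u - monom 1 k * u mod g) j \<noteq> 0}"
proof -
  define p where "p = monom 1 k * u - monom 1 k * u mod g"
  have "g \<noteq> 0"
    using g by auto
  have "degree (monom 1 k * u mod g) < k"
    using degree_mod_less[OF \<open>g \<noteq> 0\<close>, of "monom 1 k * u"] g \<open>degree u < k\<close> by auto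
  moreover have "degree (monom 1 k * u) < 2 * k"
    using degree_mult_le[of "monom 1 k" u] \<open>degree u < k\<close> by (simp add: degree_monom_eq)
  ultimately have "degree p < 2 * k"
    unfolding p_def by (intro degree_diff_less) simp_all
  have "coeff p (k + degree u) = lead_coeff u"
    unfolding p_def using \<open>degree (monom 1 k * u mod g) < k\<close> by (simp add: coeff_monom_mult coeff_eq_0)
  then have "p \<noteq> 0"
    using \<open>u \<noteq> 0\<close> by auto
  have "g dvd p"
    unfolding p_def by (simp add: minus_mod_eq_mult_div)
  then obtain c where "p = g * c" ..
  then have "poly p (b * z ^ t) = 0" if "t < k" for t
    using roots[OF that] by simp
  moreover have "inj_on (\<lambda>j. z ^ j) {..degree p}"
    using \<open>degree p < 2 * k\<close> by (intro inj_on_subset[OF inj]) auto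
  ultimately show ?thesis
    using card_nonzero_coeffs_ge_if_consecutive_roots[OF \<open>p \<noteq> 0\<close> \<open>b \<noteq> 0\<close>] unfolding p_def by blast
qed

lemma companion_power_combination_weight:
  fixes g :: "'a::field poly" and x :: "nat \<Rightarrow> 'a"
  assumes g: "degree g = k" "lead_coeff g = 1" and "b \<noteq> 0"
    and inj: "inj_on (\<lambda>j. z ^ j) {..<2 * k}" and roots: "\<And>t. t < k \<Longrightarrow> poly g (b * z ^ t) = 0"
    and "i0 < k" "x i0 \<noteq> 0"
  shows "k + 1 \<le> card {j. j < 2 * k \<and>
    (\<Sum>i<k. x i * id_concat k (companion k (\<lambda>j. - coeff g j) ^\<^sub>m k) $$ (i, j)) \<noteq> 0}"
proof -
  define u where "u = (\<Sum>i<k. monom (x i) i)"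
  define r where "r = monom 1 k * u mod g"
  have coeff_u: "coeff u j = (if j < k then x j else 0)" for j
    unfolding u_def by (simp add: coeff_sum coeff_monom)
  have "degree u \<le> k - 1"
    using coeff_u by (intro degree_le) auto
  then have "degree u < k"
    using \<open>i0 < k\<close> by linarith
  have "u \<noteq> 0"
    using coeff_u[of i0] \<open>i0 < k\<close> \<open>x i0 \<noteq> 0\<close> by auto
  have "degree r < k"
    using degree_mod_less[of g "monom 1 k * u"] g \<open>i0 < k\<close> unfolding r_def by fastforce
  have "k + 1 \<le> card {j. coeff (monom 1 k * u - r) j \<noteq> 0}"
    unfolding r_def using assms(3-5) \<open>u \<noteq> 0\<close> \<open>degree u < k\<close>
    by (rule card_nonzero_coeffs_shifted_remainder_ge[OF g])
  also have "\<dots> = card {j. j < 2 * k \<and> (if j < k then coeff u j else coeff r (j - k)) \<noteq> 0}"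
    by (rule card_nonzero_coeffs_shifted_diff[OF \<open>degree u < k\<close> \<open>degree r < k\<close>, symmetric])
  also have "\<dots> = card {j. j < 2 * k \<and>
      (\<Sum>i<k. x i * id_concat k (companion k (\<lambda>j. - coeff g j) ^\<^sub>m k) $$ (i, j)) \<noteq> 0}"
    by (intro arg_cong[where f = card] Collect_cong)
      (auto simp: id_concat_companion_power_combination[OF g] coeff_u r_def u_def[symmetric])
  finally show ?thesis .
qed

lemma companion_power_mds_if_consecutive_roots:
  fixes g :: "'a::field poly"
  assumes g: "degree g = k" "lead_coeff g = 1" and "1 \<le> k" "b \<noteq> 0"
    and "inj_on (\<lambda>j. z ^ j) {..<2 * k}" and "\<And>t. t < k \<Longrightarrow> poly g (b * z ^ t) = 0"
    and "0 \<in> F" "1 \<in> F"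
  shows "mds_matrix F k (companion k (\<lambda>j. - coeff g j) ^\<^sub>m k)"
proof (rule mds_matrix_id_concatI)
  show "companion k (\<lambda>j. - coeff g j) ^\<^sub>m k \<in> carrier_mat k k"
    unfolding companion_def by (intro pow_carrier_mat) simp
qed (use assms companion_power_combination_weight[OF g] in auto)

theorem mainTheorem2:
  fixes s k q :: nat and \<beta> :: "'a::{field,finite}" and g :: "'a poly"
  assumes "s \<ge> 1" and "q = 2 ^ s"
    and "card (UNIV :: 'a set) = q ^ 2"
    and "1 \<le> k" and "2 * k \<le> q"
    and "\<beta> ^ (q + 1) = 1" and "\<forall>n. 0 < n \<and> n < q + 1 \<longrightarrow> \<beta> ^ n \<noteq> 1"
    and "g = (if even k
              then (\<Prod>i\<in>{(int q - int k) div 2 + 1 .. (int q + int k) div 2}. [:- (\<beta> powi i), 1:])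
              else (\<Prod>i\<in>{- ((int k - 1) div 2) .. (int k - 1) div 2}. [:- (\<beta> powi i), 1:]))"
  shows "(\<forall>i. coeff g i \<in> subfield_q q)
    \<and> lead_coeff g = 1 \<and> degree g = k
    \<and> (\<forall>i\<le>k. coeff g (k - i) = coeff g i)
    \<and> mds_matrix (subfield_q q) k (companion k (\<lambda>i. coeff g i) ^\<^sub>m k)"
proof -
  have "even q"
    using assms(1,2) by simp
  then have char: "CHAR('a) = 2"
    using assms(3) by (intro CHAR_eq_2_if_card_even) simp
  obtain a c where I: "(if even k then {(int q - int k) div 2 + 1 .. (int q + int k) div 2}
      else {- ((int k - 1) div 2) .. (int k - 1) div 2}) = {a .. a + int k - 1}"
    and c: "c = 0 \<or> c = int q + 1" and reflection: "\<And>i. i \<in> {a .. a + int k - 1} \<Longrightarrow> c - i \<in> {a .. a + int k - 1}"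
    using root_exponent_interval[OF \<open>even q\<close>] by blast
  have g: "g = (\<Prod>i\<in>{a .. a + int k - 1}. [:- (\<beta> powi i), 1:])"
    unfolding I[symmetric] using assms(8) by simp
  have "\<beta> \<noteq> 0" and "\<beta> powi c = 1"
    using assms(6) c by (auto simp: add.commute simp flip: power_int_of_nat)
  have "\<forall>i. coeff g i \<in> subfield_q q"
    unfolding g using char assms(2,6) \<open>\<beta> powi c = 1\<close> reflection
    by (auto intro: coeff_prod_reflection_closed_in_subfield_q)
  moreover note monic = prod_linear_powi_interval(1,2)[OF \<open>\<beta> \<noteq> 0\<close>, of a k, folded g]
  moreover have "\<forall>i\<le>k. coeff g (k - i) = coeff g i"
    using reflect_poly_prod_reflection_closed[OF char \<open>\<beta> \<noteq> 0\<close> \<open>\<beta> powi c = 1\<close> reflection]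
    by (metis g monic(1) coeff_degree_minus_eq_if_reflect_poly_eq)
  moreover have "mds_matrix (subfield_q q) k (companion k (\<lambda>i. - coeff g i) ^\<^sub>m k)"
    using prod_linear_powi_interval(3)[OF \<open>\<beta> \<noteq> 0\<close>, of _ k a, folded g] assms(2,4,5,7) \<open>\<beta> \<noteq> 0\<close>
    by (intro companion_power_mds_if_consecutive_roots[OF monic, where b = "\<beta> powi a"]
        inj_on_power_if_order_ge) (auto simp: subfield_q_def)
  ultimately show ?thesis
    \<comment> \<open>the companion matrix of \<open>g\<close> has last row \<open>-c\<^sub>j\<close>, which is \<open>c\<^sub>j\<close> in characteristic 2\<close>
    by (simp add: uminus_CHAR_2[OF char])
qed

end
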